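(* Assume (A1)–(A3) and $\alpha>1$. Let $LR_{target}>0$ and $\hat T>0$ be given. Consider the problem of finding a concentration profile $C$ such that $LR(T)=LR_{target}$ for some $T\le\hat T$, with $AUC[C]$ as small as possible. Let $c_{opt}$ be the unique solution in $(0,\infty)$ of $k'(c)=\frac{k(c)-r}{c}$, $T_{opt}=\frac{\ln(10)LR_{target}}{k(c_{opt})-r}$, $C_{opt}(t)=c_{opt}$ for $0\le t\le T_{opt}$ and $C_{opt}(t)=0$ for $t>T_{opt}$, and $$T_{min}=\frac{\ln(10)\,LR_{target}}{k_{max}-r}.$$ Then: (i) If $\hat T\ge T_{opt}$, the solution of the problem is $C_{opt}$. (ii) If $\hat T\le T_{min}$, there is no concentration profile $C$ and no $T\le\hat T$ with $LR(T)=LR_{target}$; thus the problem has no solution. (iii) If $T_{min}<\hat T<T_{opt}$, the equation $\hat T\,[k(\hat c)-r]=\ln(10)\,LR_{target}$ has a unique solution $\hat c>0$, and the unique solution (up to a.e. equality) of the problem is $\hat C(t)=\hat c$ for $0\le t\le\hat T$, $\hat C(t)=0$ for $t>\hat T$.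
   Context: Let $r>0$ and let $k:[0,\infty)\to[0,\infty)$ satisfy: (A1) $k(0)=0$, $k$ is continuous and strictly increasing on $[0,\infty)$, and twice differentiable on $(0,\infty)$; (A2) $\lim_{c\to\infty}k(c)=k_{max}<\infty$; (A3) either (i) (concave case) $k''(c)<0$ for all $c>0$, or (ii) (sigmoidal case) there is $c_{infl}>0$ with $k''(c)>0$ for $0<c<c_{infl}$ and $k''(c)<0$ for $c>c_{infl}$. Set $\alpha=k_{max}/r$. A concentration profile is a non-negative function $C\in L^1[0,\infty)$, with $AUC[C]=\int_0^\infty C(t)\,dt$. For $T\ge0$, $LR(T)=\frac{1}{\ln 10}\int_0^T[k(C(t))-r]\,dt$. *)

theory Defs
  imports "HOL-Analysis.Analysis"
begin

definition conc_profile :: "(real \<Rightarrow> real) \<Rightarrow> bool" where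
  "conc_profile C \<longleftrightarrow> (\<forall>t\<ge>0. 0 \<le> C t) \<and> C integrable_on {0..}"

definition AUC :: "(real \<Rightarrow> real) \<Rightarrow> real" where
  "AUC C = integral {0..} C"

definition LR :: "(real \<Rightarrow> real) \<Rightarrow> real \<Rightarrow> (real \<Rightarrow> real) \<Rightarrow> real \<Rightarrow> real" where
  "LR k r C T = (1 / ln 10) * integral {0..T} (\<lambda>t. k (C t) - r)"

definition feasible :: "(real \<Rightarrow> real) \<Rightarrow> real \<Rightarrow> real \<Rightarrow> real \<Rightarrow> (real \<Rightarrow> real) \<Rightarrow> bool" where
  "feasible k r LRt That C \<longleftrightarrow>
     conc_profile C \<and> (\<exists>T. 0 \<le> T \<and> T \<le> That \<and> LR k r C T = LRt)"

definition is_solution :: "(real \<Rightarrow> real) \<Rightarrow> real \<Rightarrow> real \<Rightarrow> real \<Rightarrow> (real \<Rightarrow> real) \<Rightarrow> bool" where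
  "is_solution k r LRt That C \<longleftrightarrow>
     feasible k r LRt That C \<and> (\<forall>D. feasible k r LRt That D \<longrightarrow> AUC C \<le> AUC D)"

definition step_profile :: "real \<Rightarrow> real \<Rightarrow> real \<Rightarrow> real" where
  "step_profile c T t = (if 0 \<le> t \<and> t \<le> T then c else 0)"

definition c_opt :: "(real \<Rightarrow> real) \<Rightarrow> real \<Rightarrow> real" where
  "c_opt k r = (THE c. 0 < c \<and> deriv k c = (k c - r) / c)"

definition T_opt :: "(real \<Rightarrow> real) \<Rightarrow> real \<Rightarrow> real \<Rightarrow> real" where
  "T_opt k r LRt = ln 10 * LRt / (k (c_opt k r) - r)"

definition T_min :: "real \<Rightarrow> real \<Rightarrow> real \<Rightarrow> real" where
  "T_min kmax r LRt = ln 10 * LRt / (kmax - r)"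

end

theory Submission
  imports Defs
begin

text \<open>If a line \<open>A + B c\<close> with \<open>B > 0\<close> lies above \<open>k(c) - r\<close> on \<open>[0, \<infinity>)\<close>, every profile \<open>C\<close> reaching
  the target at a time \<open>T\<close> satisfies \<open>ln 10 \<cdot> LR\<^sub>t\<^sub>a\<^sub>r\<^sub>g\<^sub>e\<^sub>t = \<integral>\<^sub>0\<^sup>T (k(C) - r) \<le> A T + B \<integral>\<^sub>0\<^sup>T C\<close>, which
  bounds its AUC from below; in the case of equality \<open>C\<close> sits a.e. at the contact point of the line
  on \<open>[0, T]\<close> and vanishes afterwards. Without an active time constraint the right line is the
  tangent through the origin, whose slope is the maximum of \<open>(k(c) - r)/c\<close>, attained at \<open>c\<^sub>o\<^sub>p\<^sub>t\<close>.
  For \<open>T\<^sub>m\<^sub>i\<^sub>n < T\<^sup>^ < T\<^sub>o\<^sub>p\<^sub>t\<close> it is the tangent at \<open>c\<^sup>^ > c\<^sub>o\<^sub>p\<^sub>t\<close>: it lies above \<open>k - r\<close> because \<open>k\<close> is strictly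
  concave beyond \<open>c\<^sub>o\<^sub>p\<^sub>t\<close> and lies below the flatter origin line before it, and its intercept
  \<open>A > 0\<close> forces \<open>T = T\<^sup>^\<close>. For \<open>T\<^sup>^ \<le> T\<^sub>m\<^sub>i\<^sub>n\<close> the constant \<open>k\<^sub>m\<^sub>a\<^sub>x - r\<close> lies strictly above \<open>k - r\<close>,
  so the target is out of reach.\<close>

section \<open>Integrals of non-negative functions\<close>

lemma has_integral_0_nonneg_imp_negligible:
  fixes f :: "'a::euclidean_space \<Rightarrow> real"
  assumes int: "(f has_integral 0) S" and nonneg: "\<And>x. x \<in> S \<Longrightarrow> 0 \<le> f x"
  shows "negligible {x\<in>S. f x \<noteq> 0}"
proof -
  have abs_int: "f absolutely_integrable_on S"
    using nonneg has_integral_integrable[OF int] by (intro nonnegative_absolutely_integrable_1)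
  then have "set_lebesgue_integral lebesgue S f = 0"
    using int by (simp add: set_lebesgue_integral_eq_integral(2) integral_unique)
  then have "AE x in lebesgue. indicator S x *\<^sub>R f x = 0"
    unfolding set_lebesgue_integral_def
    using integral_nonneg_eq_0_iff_AE[of lebesgue "\<lambda>x. indicat_real S x *\<^sub>R f x"] abs_int nonneg
    by (auto simp: set_integrable_def indicator_def)
  then have "AE x in lebesgue. x \<notin> {x\<in>S. f x \<noteq> 0}"
    by eventually_elim (auto simp: indicator_def)
  then obtain N where "N \<in> null_sets lebesgue" "{x\<in>S. f x \<noteq> 0} \<subseteq> N"
    by (auto simp: eventually_ae_filter)
  then show ?thesis
    by (metis negligible_iff_null_sets negligible_subset)
qed

lemma has_integral_pos:
  fixes f :: "'a::euclidean_space \<Rightarrow> real"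
  assumes int: "(f has_integral i) S" and pos: "\<And>x. x \<in> S \<Longrightarrow> 0 < f x"
    and "\<not> negligible S"
  shows "0 < i"
proof -
  have "0 \<le> i"
    using has_integral_nonneg[OF int] pos less_imp_le by blast
  moreover have "i \<noteq> 0"
  proof
    assume "i = 0"
    then have "negligible {x\<in>S. f x \<noteq> 0}"
      using has_integral_0_nonneg_imp_negligible int pos less_imp_le by blast
    moreover have "{x\<in>S. f x \<noteq> 0} = S"
      using pos by force
    ultimately show False
      using \<open>\<not> negligible S\<close> by simp
  qed
  ultimately show ?thesis by simp
qed

lemma nonneg_integrable_on_subset:
  fixes f :: "'a::euclidean_space \<Rightarrow> real"
  assumes "f integrable_on S" "\<And>x. x \<in> S \<Longrightarrow> 0 \<le> f x" "T \<in> sets lebesgue" "T \<subseteq> S"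
  shows "f integrable_on T"
proof -
  have "f absolutely_integrable_on S"
    using assms(1,2) by (rule nonnegative_absolutely_integrable_1)
  then have "f absolutely_integrable_on T"
    using assms(3,4) by (rule set_integrable_subset)
  then show ?thesis
    by (simp add: absolutely_integrable_on_def)
qed

section \<open>Step profiles below a linear majorant\<close>

lemma has_integral_step_profile:
  assumes "0 \<le> T"
  shows "(step_profile c T has_integral c * T) {0..}"
proof -
  have "(step_profile c T has_integral c * T) {0..T}"
    using has_integral_const_real[of c 0 T] assms
    by (rule_tac has_integral_cong[THEN iffD1, rotated])
       (auto simp: step_profile_def mult.commute)
  then show ?thesis
    by (rule has_integral_on_superset) (auto simp: step_profile_def)
qed

lemma LR_step_profile:
  assumes "0 \<le> T"
  shows "LR k r (step_profile c T) T = T * (k c - r) / ln 10"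
proof -
  have "integral {0..T} (\<lambda>t. k (step_profile c T t) - r) = integral {0..T} (\<lambda>t. k c - r)"
    by (rule integral_cong) (simp add: step_profile_def)
  then show ?thesis
    using assms by (simp add: LR_def)
qed

lemma LR_eq_imp_has_integral:
  assumes "LR k r C T = LRt" and "LRt \<noteq> 0"
  shows "((\<lambda>t. k (C t) - r) has_integral ln 10 * LRt) {0..T}"
proof -
  have I: "integral {0..T} (\<lambda>t. k (C t) - r) = ln 10 * LRt"
    using assms(1) unfolding LR_def by (simp add: field_simps)
  then have "(\<lambda>t. k (C t) - r) integrable_on {0..T}"
    using assms(2) not_integrable_integral by fastforce
  then show ?thesis
    using I by (metis has_integral_integrable_integral)
qed

lemma AUC_ge_initial_integral:
  assumes D: "conc_profile D" and T: "0 \<le> T"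
  shows "integral {0..T} D \<le> AUC D"
    and "AUC D = integral {0..T} D \<Longrightarrow> negligible {t. T < t \<and> D t \<noteq> 0}"
proof -
  have nonneg: "\<And>t. t \<ge> 0 \<Longrightarrow> 0 \<le> D t" and int: "D integrable_on {0..}"
    using D unfolding conc_profile_def by auto
  define tail where "tail t = (if t \<le> T then 0 else D t)" for t
  have "D integrable_on {0..T}"
    using nonneg_integrable_on_subset[OF int] nonneg by auto
  then have "((\<lambda>t. if t \<in> {0..T} then D t else 0) has_integral integral {0..T} D) {0..}"
    by (subst has_integral_restrict) auto
  with integrable_integral[OF int]
  have "((\<lambda>t. D t - (if t \<in> {0..T} then D t else 0)) has_integral AUC D - integral {0..T} D) {0..}"
    unfolding AUC_def by (rule has_integral_diff)
  then have tail_int: "(tail has_integral AUC D - integral {0..T} D) {0..}"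
    by (rule has_integral_cong[THEN iffD1, rotated]) (auto simp: tail_def)
  have tail_nonneg: "0 \<le> tail t" if "t \<in> {0..}" for t
    using nonneg that by (simp add: tail_def)
  show "integral {0..T} D \<le> AUC D"
    using has_integral_nonneg[OF tail_int tail_nonneg] by simp
  assume "AUC D = integral {0..T} D"
  then have "negligible {t\<in>{0..}. tail t \<noteq> 0}"
    using tail_int tail_nonneg by (intro has_integral_0_nonneg_imp_negligible) auto
  moreover have "{t\<in>{0..}. tail t \<noteq> 0} = {t. T < t \<and> D t \<noteq> 0}"
    using T by (auto simp: tail_def)
  ultimately show "negligible {t. T < t \<and> D t \<noteq> 0}" by simp
qed

lemma LR_target_le_majorant:
  assumes line: "\<And>c. c \<ge> 0 \<Longrightarrow> k c - r \<le> A + B * c"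
    and D: "conc_profile D" and T: "0 \<le> T" and LR: "LR k r D T = LRt" and "LRt \<noteq> 0"
  shows "ln 10 * LRt \<le> A * T + B * integral {0..T} D"
    and "ln 10 * LRt = A * T + B * integral {0..T} D \<Longrightarrow>
           negligible {t\<in>{0..T}. k (D t) - r \<noteq> A + B * D t}"
proof -
  have nonneg: "\<And>t. t \<ge> 0 \<Longrightarrow> 0 \<le> D t"
    using D unfolding conc_profile_def by auto
  have "D integrable_on {0..T}"
    using D nonneg_integrable_on_subset[of D "{0..}" "{0..T}"] by (auto simp: conc_profile_def)
  then have "((\<lambda>t. A + B * D t) has_integral A * T + B * integral {0..T} D) {0..T}"
    using has_integral_const_real[of A 0 T] T
    by (intro has_integral_add has_integral_mult_right) (auto simp: mult.commute)
  then have gap_int: "((\<lambda>t. A + B * D t - (k (D t) - r)) has_integral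
                        A * T + B * integral {0..T} D - ln 10 * LRt) {0..T}"
    using LR_eq_imp_has_integral[OF LR \<open>LRt \<noteq> 0\<close>] by (rule has_integral_diff)
  have gap_nonneg: "0 \<le> A + B * D t - (k (D t) - r)" if "t \<in> {0..T}" for t
    using line nonneg that by simp
  show "ln 10 * LRt \<le> A * T + B * integral {0..T} D"
    using has_integral_nonneg[OF gap_int gap_nonneg] by simp
  assume "ln 10 * LRt = A * T + B * integral {0..T} D"
  then have "negligible {t\<in>{0..T}. A + B * D t - (k (D t) - r) \<noteq> 0}"
    using gap_int gap_nonneg by (intro has_integral_0_nonneg_imp_negligible) auto
  then show "negligible {t\<in>{0..T}. k (D t) - r \<noteq> A + B * D t}"
    by (rule back_subst[of negligible]) auto
qed

context
  fixes k :: "real \<Rightarrow> real" and r A B cs Ts That LRt :: real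
  assumes majorant: "\<And>c. c \<ge> 0 \<Longrightarrow> k c - r \<le> A + B * c"
    and contact: "\<And>c. c \<ge> 0 \<Longrightarrow> k c - r = A + B * c \<Longrightarrow> c = cs"
    and at_contact: "k cs - r = A + B * cs"
    and B_pos: "0 < B" and A_nonneg: "0 \<le> A" and cs_pos: "0 < cs"
    and Ts: "0 \<le> Ts" "Ts \<le> That"
    and Ts_LR: "Ts * (k cs - r) = ln 10 * LRt"
    and A_zero_or_Ts_max: "A = 0 \<or> Ts = That"
    and LRt_pos: "0 < LRt"
begin

lemma feasible_step_profile: "feasible k r LRt That (step_profile cs Ts)"
  unfolding feasible_def conc_profile_def
proof (intro conjI allI impI exI)
  show "step_profile cs Ts integrable_on {0..}"
    using has_integral_step_profile[OF Ts(1)] by blast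
  show "LR k r (step_profile cs Ts) Ts = LRt"
    using Ts_LR by (simp add: LR_step_profile[OF Ts(1)])
qed (use cs_pos Ts in \<open>auto simp: step_profile_def\<close>)

lemma AUC_step_profile: "AUC (step_profile cs Ts) = cs * Ts"
  using has_integral_step_profile[OF Ts(1)] by (simp add: AUC_def integral_unique)

lemma AUC_ge_step_profile:
  assumes "feasible k r LRt That D"
  shows "cs * Ts \<le> AUC D"
    and "AUC D \<le> cs * Ts \<Longrightarrow> AE t in lborel. t \<ge> 0 \<longrightarrow> D t = step_profile cs Ts t"
proof -
  obtain T where D: "conc_profile D" and T: "0 \<le> T" "T \<le> That" and LR: "LR k r D T = LRt"
    using assms unfolding feasible_def by blast
  define I where "I = integral {0..T} D"
  have LR_le: "ln 10 * LRt \<le> A * T + B * I"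
    unfolding I_def using LR_target_le_majorant(1)[OF majorant D T(1) LR] LRt_pos by simp
  have LR_eq: "ln 10 * LRt = A * Ts + B * (cs * Ts)"
    using Ts_LR at_contact by (simp add: algebra_simps)
  have "A * T \<le> A * Ts"
    using A_zero_or_Ts_max T A_nonneg by (auto intro: mult_left_mono)
  then have "B * (cs * Ts) \<le> B * I"
    using LR_le LR_eq by linarith
  then have "cs * Ts \<le> I"
    using B_pos by simp
  moreover have I_le: "I \<le> AUC D"
    unfolding I_def using AUC_ge_initial_integral(1)[OF D T(1)] .
  ultimately show "cs * Ts \<le> AUC D" by linarith
  assume "AUC D \<le> cs * Ts"
  then have I: "I = cs * Ts" "AUC D = I"
    using \<open>cs * Ts \<le> I\<close> I_le by linarith+
  then have "ln 10 * LRt = A * T + B * I"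
    using LR_le LR_eq \<open>A * T \<le> A * Ts\<close> by simp
  then have off_contact: "negligible {t\<in>{0..T}. D t \<noteq> cs}"
    using LR_target_le_majorant(2)[OF majorant D T(1) LR] LRt_pos contact D
    unfolding I_def conc_profile_def
    by (rule_tac negligible_subset[of "{t\<in>{0..T}. k (D t) - r \<noteq> A + B * D t}"]) auto
  have "(D has_integral cs * T) {0..T}"
    using has_integral_const_real[of cs 0 T] T(1)
    by (rule_tac has_integral_spike[OF off_contact]) (auto simp: mult.commute)
  then have "T = Ts"
    using I cs_pos unfolding I_def by (simp add: integral_unique)
  moreover have "negligible {t. T < t \<and> D t \<noteq> 0}"
    using AUC_ge_initial_integral(2)[OF D T(1)] I unfolding I_def by blast
  ultimately have "AE t in lebesgue. t \<notin> {t\<in>{0..T}. D t \<noteq> cs} \<union> {t. T < t \<and> D t \<noteq> 0}"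
    using off_contact negligible_Un negligible_iff_null_sets AE_not_in by blast
  then have "AE t in lebesgue. t \<ge> 0 \<longrightarrow> D t = step_profile cs Ts t"
    by eventually_elim (auto simp: step_profile_def \<open>T = Ts\<close>)
  then show "AE t in lborel. t \<ge> 0 \<longrightarrow> D t = step_profile cs Ts t"
    by (simp add: AE_completion_iff)
qed

lemma step_profile_unique_solution:
  "is_solution k r LRt That (step_profile cs Ts) \<and>
   (\<forall>D. is_solution k r LRt That D \<longrightarrow>
      (AE t in lborel. t \<ge> 0 \<longrightarrow> D t = step_profile cs Ts t))"
  using feasible_step_profile AUC_step_profile AUC_ge_step_profile
  unfolding is_solution_def by metis

end

section \<open>Concave and sigmoidal kill rates\<close>

lemma below_tangent_if_deriv_strict_decreasing:
  fixes f f' :: "real \<Rightarrow> real"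
  assumes deriv: "\<And>x. a \<le> x \<Longrightarrow> (f has_real_derivative f' x) (at x)"
    and decreasing: "\<And>x y. a \<le> x \<Longrightarrow> x < y \<Longrightarrow> f' y < f' x"
    and "a \<le> x0" "a \<le> x" "x \<noteq> x0"
  shows "f x < f x0 + f' x0 * (x - x0)"
proof (cases "x0 < x")
  case True
  then obtain z where "x0 < z" "z < x" "f x - f x0 = (x - x0) * f' z"
    using MVT2[of x0 x f f'] deriv \<open>a \<le> x0\<close> by force
  moreover have "(x - x0) * f' z < (x - x0) * f' x0"
    using decreasing \<open>a \<le> x0\<close> \<open>x0 < z\<close> True by simp
  ultimately show ?thesis
    by (simp add: algebra_simps)
next
  case False
  then have "x < x0" using \<open>x \<noteq> x0\<close> by simp
  then obtain z where "x < z" "z < x0" "f x0 - f x = (x0 - x) * f' z"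
    using MVT2[of x x0 f f'] deriv \<open>a \<le> x\<close> by force
  moreover have "(x0 - x) * f' x0 < (x0 - x) * f' z"
    using decreasing \<open>a \<le> x\<close> \<open>x < z\<close> \<open>z < x0\<close> \<open>x < x0\<close> by simp
  ultimately show ?thesis
    by (simp add: algebra_simps)
qed

locale kill_rate =
  fixes k :: "real \<Rightarrow> real" and r kmax :: real
  assumes r_pos: "0 < r"
    and k_0: "k 0 = 0"
    and k_cont: "continuous_on {0..} k"
    and k_strict_mono: "strict_mono_on {0..} k"
    and k_differentiable: "\<And>c. 0 < c \<Longrightarrow> k differentiable (at c)"
    and deriv_k_differentiable: "\<And>c. 0 < c \<Longrightarrow> deriv k differentiable (at c)"
    and k_tendsto: "(k \<longlongrightarrow> kmax) at_top"
    and concave_or_sigmoidal: "(\<forall>c>0. deriv (deriv k) c < 0) \<or>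
       (\<exists>c_infl>0. (\<forall>c. 0 < c \<and> c < c_infl \<longrightarrow> deriv (deriv k) c > 0) \<and>
                   (\<forall>c>c_infl. deriv (deriv k) c < 0))"
    and r_less_kmax: "r < kmax"
begin

lemma has_deriv_k: "0 < c \<Longrightarrow> (k has_real_derivative deriv k c) (at c)"
  using k_differentiable DERIV_deriv_iff_real_differentiable by blast

lemma has_deriv_deriv_k: "0 < c \<Longrightarrow> (deriv k has_real_derivative deriv (deriv k) c) (at c)"
  using deriv_k_differentiable DERIV_deriv_iff_real_differentiable by blast

lemma k_less_iff: "0 \<le> a \<Longrightarrow> 0 \<le> b \<Longrightarrow> k a < k b \<longleftrightarrow> a < b"
  using strict_mono_on_less[OF k_strict_mono] by simp

lemma k_le_iff: "0 \<le> a \<Longrightarrow> 0 \<le> b \<Longrightarrow> k a \<le> k b \<longleftrightarrow> a \<le> b"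
  using strict_mono_on_less_eq[OF k_strict_mono] by simp

lemma deriv_k_nonneg: "0 < c \<Longrightarrow> 0 \<le> deriv k c"
  using mono_on_imp_deriv_nonneg[OF strict_mono_on_imp_mono_on[OF k_strict_mono] has_deriv_k]
  by simp

lemma k_less_kmax: "0 \<le> c \<Longrightarrow> k c < kmax"
proof -
  assume "0 \<le> c"
  have "eventually (\<lambda>x. k (c + 1) \<le> k x) at_top"
    using eventually_ge_at_top[of "c + 1"]
    by eventually_elim (use \<open>0 \<le> c\<close> in \<open>simp add: k_le_iff\<close>)
  then have "k (c + 1) \<le> kmax"
    using k_tendsto by (intro tendsto_lowerbound) auto
  moreover have "k c < k (c + 1)"
    using \<open>0 \<le> c\<close> by (simp add: k_less_iff)
  ultimately show ?thesis by simp
qed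

lemma ex_k_greater: "y < kmax \<Longrightarrow> \<exists>c\<ge>0. y < k c"
proof -
  assume "y < kmax"
  then have "eventually (\<lambda>x. y < k x) at_top"
    by (rule order_tendstoD(1)[OF k_tendsto])
  then obtain N where "\<forall>x\<ge>N. y < k x"
    by (auto simp: eventually_at_top_linorder)
  then show ?thesis by (intro exI[of _ "max N 0"]) auto
qed

lemma ex_k_less_r: "\<exists>a>0. k a < r"
proof -
  have "(k \<longlongrightarrow> k 0) (at_right 0)"
    using k_cont by (auto simp: continuous_on_def intro: tendsto_within_subset)
  then have "eventually (\<lambda>x. k x < r) (at_right 0)"
    using r_pos k_0 by (intro order_tendstoD) auto
  then obtain b where "0 < b" "\<forall>x. 0 < x \<and> x < b \<longrightarrow> k x < r"
    by (auto simp: eventually_at_right_field)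
  then show ?thesis by (intro exI[of _ "b / 2"]) auto
qed

text \<open>The tangent to \<open>k - r\<close> at \<open>c\<close> passes through the origin iff \<open>tangent_gap c = 0\<close>,
  i.e. iff \<open>k'(c) = (k(c) - r) / c\<close>, the equation defining \<open>c_opt\<close>.\<close>
definition tangent_gap :: "real \<Rightarrow> real" where
  "tangent_gap c = c * deriv k c - (k c - r)"

lemma has_deriv_tangent_gap:
  "0 < c \<Longrightarrow> (tangent_gap has_real_derivative c * deriv (deriv k) c) (at c)"
proof -
  assume c: "0 < c"
  have "((\<lambda>c. c * deriv k c - (k c - r)) has_real_derivative
          (c * deriv (deriv k) c + 1 * deriv k c) - (deriv k c - 0)) (at c)"
    by (intro DERIV_diff DERIV_mult'[OF DERIV_ident has_deriv_deriv_k[OF c]] has_deriv_k DERIV_const c)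
  then show ?thesis
    unfolding tangent_gap_def [abs_def] by simp
qed

lemma ex_concavity_threshold:
  "\<exists>s\<ge>0. (\<forall>c. 0 < c \<and> c \<le> s \<longrightarrow> 0 < tangent_gap c) \<and> (\<forall>c>s. deriv (deriv k) c < 0)"
  using concave_or_sigmoidal
proof
  assume "\<forall>c>0. deriv (deriv k) c < 0"
  then show ?thesis by (intro exI[of _ 0]) auto
next
  assume "\<exists>c_infl>0. (\<forall>c. 0 < c \<and> c < c_infl \<longrightarrow> deriv (deriv k) c > 0) \<and>
                     (\<forall>c>c_infl. deriv (deriv k) c < 0)"
  then obtain s where s: "0 < s" "\<And>c. 0 < c \<Longrightarrow> c < s \<Longrightarrow> deriv (deriv k) c > 0"
    "\<forall>c>s. deriv (deriv k) c < 0" by blast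
  text \<open>On \<open>(0, s]\<close> the derivative \<open>k'\<close> increases, so the mean slope \<open>k(c)/c\<close> is at most \<open>k'(c)\<close>.\<close>
  have "0 < tangent_gap c" if c: "0 < c" "c \<le> s" for c
  proof -
    have "continuous_on {0..c} k"
      using k_cont by (rule continuous_on_subset) auto
    then obtain l z where z: "0 < z" "z < c" "(k has_real_derivative l) (at z)" "k c - k 0 = (c - 0) * l"
      using MVT[OF c(1), of k] k_differentiable by force
    then have "l = deriv k z"
      using has_deriv_k DERIV_unique by blast
    obtain w where w: "z < w" "w < c" "deriv k c - deriv k z = (c - z) * deriv (deriv k) w"
      using MVT2[OF z(2), of "deriv k" "deriv (deriv k)"] has_deriv_deriv_k z(1) by force
    have "0 < (c - z) * deriv (deriv k) w"
      using w z c s(2)[of w] by simp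
    then have "deriv k z \<le> deriv k c"
      using w(3) by linarith
    then have "k c \<le> c * deriv k c"
      using z \<open>l = deriv k z\<close> k_0 c(1) by (simp add: mult_left_mono)
    then show ?thesis
      using r_pos by (simp add: tangent_gap_def)
  qed
  then show ?thesis
    using s by (intro exI[of _ s]) auto
qed

lemma deriv_k_strict_decreasing_on_concave:
  assumes "\<And>c. s < c \<Longrightarrow> deriv (deriv k) c < 0" "0 \<le> s" "s < x" "x < y"
  shows "deriv k y < deriv k x"
proof (rule DERIV_neg_imp_decreasing[OF \<open>x < y\<close>])
  fix t assume "x \<le> t" "t \<le> y"
  then have "0 < t" "deriv (deriv k) t < 0"
    using assms by auto
  then show "\<exists>d. (deriv k has_real_derivative d) (at t) \<and> d < 0"
    using has_deriv_deriv_k by blast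
qed

lemma tangent_gap_strict_decreasing_on_concave:
  assumes "\<And>c. s < c \<Longrightarrow> deriv (deriv k) c < 0" "0 \<le> s" "s < x" "x < y"
  shows "tangent_gap y < tangent_gap x"
proof (rule DERIV_neg_imp_decreasing[OF \<open>x < y\<close>])
  fix t assume "x \<le> t" "t \<le> y"
  then have "0 < t" "deriv (deriv k) t < 0"
    using assms by auto
  then show "\<exists>d. (tangent_gap has_real_derivative d) (at t) \<and> d < 0"
    using has_deriv_tangent_gap mult_pos_neg by blast
qed

lemma tangent_gap_root_unique:
  assumes "0 < c" "0 < d" "tangent_gap c = 0" "tangent_gap d = 0"
  shows "c = d"
proof -
  obtain s where s: "0 \<le> s" "\<forall>c. 0 < c \<and> c \<le> s \<longrightarrow> 0 < tangent_gap c"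
    "\<forall>c>s. deriv (deriv k) c < 0"
    using ex_concavity_threshold by blast
  have "s < c" "s < d"
    using s(2) assms by force+
  have decreasing: "tangent_gap y < tangent_gap x" if "s < x" "x < y" for x y
    using tangent_gap_strict_decreasing_on_concave[of s x y] s(1,3) that by simp
  show ?thesis
    using decreasing[of c d] decreasing[of d c] \<open>s < c\<close> \<open>s < d\<close> assms(3,4)
    by (cases c d rule: linorder_cases) auto
qed

lemma tangent_gap_zero_if_max_slope:
  assumes c: "0 < c" and max: "\<And>y. 0 < y \<Longrightarrow> (k y - r) / y \<le> (k c - r) / c"
  shows "tangent_gap c = 0"
proof -
  have "((\<lambda>y. (k y - r) / y) has_real_derivative
          ((deriv k c - 0) * c - (k c - r) * 1) / (c * c)) (at c)"
    using c by (intro DERIV_divide DERIV_diff has_deriv_k DERIV_const DERIV_ident) auto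
  then have "((deriv k c - 0) * c - (k c - r) * 1) / (c * c) = 0"
    by (rule DERIV_local_max[OF _ c]) (use max in auto)
  then show ?thesis
    using c by (simp add: tangent_gap_def algebra_simps)
qed

text \<open>The slope \<open>(k(y) - r)/y\<close> is negative left of any \<open>a\<close> with \<open>k(a) < r\<close> and, since \<open>k < k\<^sub>m\<^sub>a\<^sub>x\<close>,
  below \<open>h = (k(c\<^sub>1) - r)/c\<^sub>1 > 0\<close> right of \<open>(k\<^sub>m\<^sub>a\<^sub>x - r)/h\<close>; so its supremum is attained on a compact interval.\<close>
lemma ex_max_slope: "\<exists>c>0. (\<forall>y>0. (k y - r) / y \<le> (k c - r) / c) \<and> 0 < (k c - r) / c"
proof -
  obtain a where a: "0 < a" "k a < r"
    using ex_k_less_r by blast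
  obtain c1 where c1: "0 \<le> c1" "r < k c1"
    using ex_k_greater r_less_kmax by blast
  have "a < c1"
  proof (rule ccontr)
    assume "\<not> a < c1"
    then have "k c1 \<le> k a"
      using a c1 by (simp add: k_le_iff)
    then show False
      using a c1 by simp
  qed
  define h where "h = (k c1 - r) / c1"
  define b where "b = max c1 ((kmax - r) / h)"
  have h: "0 < h"
    using c1 a \<open>a < c1\<close> by (simp add: h_def)
  have "continuous_on {a..b} k"
    using k_cont by (rule continuous_on_subset) (use a in auto)
  then have "continuous_on {a..b} (\<lambda>y. (k y - r) / y)"
    using a(1) by (intro continuous_on_divide continuous_on_diff continuous_on_id continuous_on_const) auto
  moreover have "{a..b} \<noteq> {}"
    using \<open>a < c1\<close> by (simp add: b_def)
  ultimately obtain c where c: "c \<in> {a..b}" "\<forall>y\<in>{a..b}. (k y - r) / y \<le> (k c - r) / c"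
    using continuous_attains_sup[OF compact_Icc] by blast
  have h_le: "h \<le> (k c - r) / c"
    using c \<open>a < c1\<close> by (auto simp: h_def b_def)
  have "(k y - r) / y \<le> (k c - r) / c" if y: "0 < y" for y
  proof -
    consider "y < a" | "y \<in> {a..b}" | "b < y" by force
    then show ?thesis
    proof cases
      case 1
      then have "k y < r"
        using k_less_iff[of y a] a y by simp
      then have "(k y - r) / y < 0"
        using y by (simp add: divide_neg_pos)
      then show ?thesis using h h_le by linarith
    next
      case 2
      then show ?thesis using c by blast
    next
      case 3
      then have "kmax - r \<le> h * y"
        using h by (simp add: b_def field_simps)
      then have "k y - r \<le> h * y"
        using k_less_kmax[of y] y by simp
      then have "(k y - r) / y \<le> h"
        using y by (simp add: field_simps)
      then show ?thesis using h_le by linarith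
    qed
  qed
  then show ?thesis
    using c a h h_le by (intro exI[of _ c]) auto
qed

lemma c_opt_eq:
  assumes "0 < c" "tangent_gap c = 0"
  shows "c_opt k r = c"
proof -
  have "0 < d \<and> deriv k d = (k d - r) / d \<longleftrightarrow> 0 < d \<and> tangent_gap d = 0" for d
    by (auto simp: tangent_gap_def field_simps)
  then show ?thesis
    unfolding c_opt_def using assms tangent_gap_root_unique by (simp add: the_equality)
qed

lemma c_opt_max_slope:
  shows c_opt_pos: "0 < c_opt k r"
    and tangent_gap_c_opt: "tangent_gap (c_opt k r) = 0"
    and slope_le_c_opt: "\<And>y. 0 < y \<Longrightarrow> (k y - r) / y \<le> (k (c_opt k r) - r) / c_opt k r"
    and k_c_opt_gt_r: "r < k (c_opt k r)"
proof -
  obtain c where c: "0 < c" "\<And>y. 0 < y \<Longrightarrow> (k y - r) / y \<le> (k c - r) / c" "0 < (k c - r) / c"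
    using ex_max_slope by blast
  have "tangent_gap c = 0"
    using tangent_gap_zero_if_max_slope c by blast
  then have "c_opt k r = c"
    using c_opt_eq c(1) by blast
  then show "0 < c_opt k r" "tangent_gap (c_opt k r) = 0"
    "\<And>y. 0 < y \<Longrightarrow> (k y - r) / y \<le> (k (c_opt k r) - r) / c_opt k r" "r < k (c_opt k r)"
    using c \<open>tangent_gap c = 0\<close> by (auto simp: zero_less_divide_iff)
qed

definition max_slope :: real where
  "max_slope = (k (c_opt k r) - r) / c_opt k r"

lemma max_slope_pos: "0 < max_slope"
  using c_opt_pos k_c_opt_gt_r by (simp add: max_slope_def)

lemma deriv_k_c_opt: "deriv k (c_opt k r) = max_slope"
  using tangent_gap_c_opt c_opt_pos by (simp add: tangent_gap_def max_slope_def field_simps)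

lemma below_origin_line: "0 \<le> c \<Longrightarrow> k c - r \<le> max_slope * c"
  using slope_le_c_opt[of c] k_0 r_pos
  by (cases "c = 0") (auto simp: max_slope_def field_simps)

lemma origin_line_contact:
  assumes "0 \<le> c" "k c - r = max_slope * c"
  shows "c = c_opt k r"
proof -
  have "0 < c"
    using assms k_0 r_pos by (cases "c = 0") auto
  then have "(k c - r) / c = max_slope"
    using assms(2) by simp
  then have "tangent_gap c = 0"
    using slope_le_c_opt \<open>0 < c\<close> by (intro tangent_gap_zero_if_max_slope) (auto simp: max_slope_def)
  then show ?thesis
    using c_opt_eq \<open>0 < c\<close> by simp
qed

lemma deriv_k_strict_decreasing:
  assumes "c_opt k r \<le> x" "x < y"
  shows "deriv k y < deriv k x"
proof -
  obtain s where s: "0 \<le> s" "\<forall>c. 0 < c \<and> c \<le> s \<longrightarrow> 0 < tangent_gap c"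
    "\<forall>c>s. deriv (deriv k) c < 0"
    using ex_concavity_threshold by blast
  have "s < c_opt k r"
    using s(2) c_opt_pos tangent_gap_c_opt by force
  then show ?thesis
    using deriv_k_strict_decreasing_on_concave[of s x y] s(1,3) assms by simp
qed

lemma unconstrained_solution:
  assumes LRt: "0 < LRt" and That: "T_opt k r LRt \<le> That"
  shows "is_solution k r LRt That (step_profile (c_opt k r) (T_opt k r LRt)) \<and>
         (\<forall>D. is_solution k r LRt That D \<longrightarrow>
            (AE t in lborel. t \<ge> 0 \<longrightarrow> D t = step_profile (c_opt k r) (T_opt k r LRt) t))"
proof (rule step_profile_unique_solution[where A = 0 and B = max_slope])
  show "\<And>c. 0 \<le> c \<Longrightarrow> k c - r \<le> 0 + max_slope * c"
    using below_origin_line by simp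
  show "\<And>c. 0 \<le> c \<Longrightarrow> k c - r = 0 + max_slope * c \<Longrightarrow> c = c_opt k r"
    using origin_line_contact by simp
  show "k (c_opt k r) - r = 0 + max_slope * c_opt k r"
    using c_opt_pos by (simp add: max_slope_def)
  show "0 \<le> T_opt k r LRt" "T_opt k r LRt * (k (c_opt k r) - r) = ln 10 * LRt"
    using k_c_opt_gt_r LRt by (simp_all add: T_opt_def)
qed (simp_all add: max_slope_pos c_opt_pos LRt That)

lemma not_reachable_before_T_min:
  assumes LRt: "0 < LRt" and That: "That \<le> T_min kmax r LRt"
    and C: "conc_profile C" and T: "0 \<le> T" "T \<le> That"
  shows "LR k r C T \<noteq> LRt"
proof
  assume "LR k r C T = LRt"
  then have int: "((\<lambda>t. k (C t) - r) has_integral ln 10 * LRt) {0..T}"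
    using LRt by (intro LR_eq_imp_has_integral) auto
  have "T \<noteq> 0"
  proof
    assume "T = 0"
    then have "ln 10 * LRt = 0"
      using integral_unique[OF int] by simp
    then show False using LRt by simp
  qed
  then have "\<not> negligible {0..T}"
    using T(1) negligible_interval(1)[of 0 T] by simp
  moreover have "((\<lambda>t. (kmax - r) - (k (C t) - r)) has_integral T * (kmax - r) - ln 10 * LRt) {0..T}"
    using has_integral_const_real[of "kmax - r" 0 T] T(1) int by (intro has_integral_diff) auto
  moreover have "0 < (kmax - r) - (k (C t) - r)" if "t \<in> {0..T}" for t
    using C that k_less_kmax by (simp add: conc_profile_def)
  ultimately have "0 < T * (kmax - r) - ln 10 * LRt"
    by (rule_tac has_integral_pos)
  then have "ln 10 * LRt < T * (kmax - r)"
    by simp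
  also have "\<dots> \<le> That * (kmax - r)"
    using T r_less_kmax by (simp add: mult_right_mono)
  also have "\<dots> \<le> ln 10 * LRt"
    using That r_less_kmax by (simp add: T_min_def le_divide_eq)
  finally show False by simp
qed

lemma ex1_constrained_level:
  assumes LRt: "0 < LRt" and That: "T_min kmax r LRt < That" "0 < That"
  shows "\<exists>!c. 0 < c \<and> That * (k c - r) = ln 10 * LRt"
proof -
  define y where "y = r + ln 10 * LRt / That"
  have "ln 10 * LRt < (kmax - r) * That"
    using That(1) r_less_kmax by (simp add: T_min_def pos_divide_less_eq mult.commute)
  then have "ln 10 * LRt / That < kmax - r"
    using That(2) by (simp add: pos_divide_less_eq)
  then have "y < kmax"
    by (simp add: y_def)
  then obtain b where b: "0 \<le> b" "y < k b"
    using ex_k_greater by blast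
  have "0 < y"
    unfolding y_def using r_pos LRt That(2) by (intro add_pos_pos divide_pos_pos) auto
  moreover have "continuous_on {0..b} k"
    using k_cont by (rule continuous_on_subset) auto
  ultimately obtain c where c: "0 \<le> c" "k c = y"
    using IVT'[of k 0 y b] k_0 b by auto
  then have "0 < c"
    using k_0 \<open>0 < y\<close> by (cases "c = 0") auto
  have level: "That * (k d - r) = ln 10 * LRt \<longleftrightarrow> k d = y" for d
    using That(2) by (auto simp: y_def field_simps)
  show ?thesis
  proof (rule ex1I[of _ c])
    show "0 < c \<and> That * (k c - r) = ln 10 * LRt"
      using \<open>0 < c\<close> c(2) level[of c] by blast
    fix d assume "0 < d \<and> That * (k d - r) = ln 10 * LRt"
    then show "d = c"
      using strict_mono_on_eq[OF k_strict_mono, of d c] level c by simp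
  qed
qed

lemma below_tangent_beyond_c_opt:
  assumes ch: "c_opt k r < ch" and c: "0 \<le> c" "c \<noteq> ch"
  shows "k c < k ch + deriv k ch * (c - ch)"
proof -
  have beyond: "k x < k ch + deriv k ch * (x - ch)" if "c_opt k r \<le> x" "x \<noteq> ch" for x
    using c_opt_pos ch that has_deriv_k deriv_k_strict_decreasing
    by (intro below_tangent_if_deriv_strict_decreasing[where a = "c_opt k r"]) auto
  show ?thesis
  proof (cases "c_opt k r \<le> c")
    case True
    then show ?thesis using beyond c(2) by blast
  next
    case False
    text \<open>Left of \<open>c_opt\<close> the origin line lies above \<open>k - r\<close> and below the flatter tangent at \<open>ch\<close>.\<close>
    have "deriv k ch < max_slope"
      using deriv_k_strict_decreasing[OF order_refl ch] deriv_k_c_opt by simp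
    then have "max_slope * (c - c_opt k r) < deriv k ch * (c - c_opt k r)"
      using False by (simp add: mult_strict_right_mono_neg)
    moreover have "k (c_opt k r) - r = max_slope * c_opt k r"
      using c_opt_pos by (simp add: max_slope_def)
    moreover have "k c - r \<le> max_slope * c"
      using below_origin_line c(1) .
    moreover have "k (c_opt k r) < k ch + deriv k ch * (c_opt k r - ch)"
      using beyond ch by simp
    ultimately show ?thesis
      by (simp add: algebra_simps)
  qed
qed

lemma constrained_solution:
  assumes LRt: "0 < LRt" and That: "0 < That" "That < T_opt k r LRt"
    and ch: "0 < ch" "That * (k ch - r) = ln 10 * LRt"
  shows "is_solution k r LRt That (step_profile ch That) \<and>
         (\<forall>D. is_solution k r LRt That D \<longrightarrow>
            (AE t in lborel. t \<ge> 0 \<longrightarrow> D t = step_profile ch That t))"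
proof -
  let ?c0 = "c_opt k r"
  define B where "B = deriv k ch"
  define A where "A = k ch - r - B * ch"
  have "That * (k ?c0 - r) < ln 10 * LRt"
    using That(2) k_c_opt_gt_r by (simp add: T_opt_def less_divide_eq)
  then have "k ?c0 < k ch"
    using ch(2) That(1) mult_less_cancel_left_pos[of That "k ?c0 - r" "k ch - r"] by simp
  then have c0_ch: "?c0 < ch"
    using k_less_iff c_opt_pos ch(1) by simp
  have strict: "k c - r < A + B * c" if "0 \<le> c" "c \<noteq> ch" for c
    using below_tangent_beyond_c_opt[OF c0_ch that] by (simp add: A_def B_def algebra_simps)
  have "0 \<le> deriv k (ch + 1)"
    using ch(1) by (simp add: deriv_k_nonneg)
  then have "0 < B"
    using deriv_k_strict_decreasing[of ch "ch + 1"] c0_ch by (simp add: B_def)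
  have "B * ?c0 < max_slope * ?c0"
    using deriv_k_strict_decreasing[OF order_refl c0_ch] deriv_k_c_opt c_opt_pos
    by (simp add: B_def)
  then have "0 < A"
    using strict[of ?c0] c_opt_pos c0_ch by (simp add: max_slope_def)
  show ?thesis
  proof (rule step_profile_unique_solution[where A = A and B = B])
    fix c :: real
    assume "0 \<le> c"
    then show "k c - r \<le> A + B * c"
      using strict[of c] by (cases "c = ch") (auto simp: A_def)
    show "k c - r = A + B * c \<Longrightarrow> c = ch"
      using strict[of c] \<open>0 \<le> c\<close> by auto
  next
    show "k ch - r = A + B * ch"
      by (simp add: A_def)
  qed (simp_all add: \<open>0 < A\<close> \<open>0 < B\<close> ch That LRt less_imp_le)
qed

end

theorem theorem2:
  fixes k :: "real \<Rightarrow> real" and r kmax LRt That :: real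
  assumes r_pos: "r > 0"
    and A1_0: "k 0 = 0"
    and A1_nonneg: "\<forall>c\<ge>0. k c \<ge> 0"
    and A1_cont: "continuous_on {0..} k"
    and A1_mono: "strict_mono_on {0..} k"
    and A1_diff: "\<forall>c>0. k differentiable (at c)"
    and A1_diff2: "\<forall>c>0. (deriv k) differentiable (at c)"
    and A2: "(k \<longlongrightarrow> kmax) at_top"
    and A3: "(\<forall>c>0. deriv (deriv k) c < 0) \<or>
             (\<exists>c_infl>0. (\<forall>c. 0 < c \<and> c < c_infl \<longrightarrow> deriv (deriv k) c > 0) \<and>
                         (\<forall>c>c_infl. deriv (deriv k) c < 0))"
    and alpha: "kmax / r > 1"
    and LRt_pos: "LRt > 0"
    and That_pos: "That > 0"
  shows
    "(That \<ge> T_opt k r LRt \<longrightarrow>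
        is_solution k r LRt That (step_profile (c_opt k r) (T_opt k r LRt)) \<and>
        (\<forall>D. is_solution k r LRt That D \<longrightarrow>
           (AE t in lborel. t \<ge> 0 \<longrightarrow> D t = step_profile (c_opt k r) (T_opt k r LRt) t)))
   \<and> (That \<le> T_min kmax r LRt \<longrightarrow>
        \<not> (\<exists>C T. conc_profile C \<and> 0 \<le> T \<and> T \<le> That \<and> LR k r C T = LRt))
   \<and> (T_min kmax r LRt < That \<and> That < T_opt k r LRt \<longrightarrow>
        (\<exists>!c. c > 0 \<and> That * (k c - r) = ln 10 * LRt) \<and>
        (\<forall>c. c > 0 \<and> That * (k c - r) = ln 10 * LRt \<longrightarrow>
           is_solution k r LRt That (step_profile c That) \<and>
           (\<forall>D. is_solution k r LRt That D \<longrightarrow>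
              (AE t in lborel. t \<ge> 0 \<longrightarrow> D t = step_profile c That t))))"
proof -
  have "r < kmax"
    using alpha r_pos by (simp add: less_divide_eq)
  then interpret kill_rate k r kmax
    by unfold_locales (use r_pos A1_0 A1_cont A1_mono A1_diff A1_diff2 A2 A3 in blast)+
  show ?thesis (is "?unconstrained \<and> ?unreachable \<and> ?constrained")
  proof (intro conjI)
    show ?unconstrained
      by (rule impI) (rule unconstrained_solution[OF LRt_pos])
    show ?unreachable
    proof (intro impI notI, elim exE conjE)
      fix C T
      assume "That \<le> T_min kmax r LRt" "conc_profile C" "0 \<le> T" "T \<le> That" and "LR k r C T = LRt"
      with not_reachable_before_T_min[OF LRt_pos] show False by simp
    qed
    show ?constrained
    proof (intro impI conjI allI; elim conjE)
    qed (simp_all add: ex1_constrained_level[OF LRt_pos _ That_pos]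
                       constrained_solution[OF LRt_pos That_pos])
  qed
qed

end
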